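(* Let $\underline a=(a_1,a_2,a_3)$, $\underline b=(b_1,b_2,b_3)\in\mathbb{Z}^3$ with all $a_i,b_i\equiv1\pmod4$ and $\gcd(a_1,a_2,a_3)=\gcd(b_1,b_2,b_3)=1$. The subgroup $\{1\}\times\Delta\mathbf{S}^3\subseteq G$ acts freely on $P^{10}_{\underline a,\underline b}$ if and only if $\gcd(a_1,a_2\pm a_3)=1$ and $\gcd(b_1,b_2\pm b_3)=1$.
   Context: $\mathbf{S}^3$ is the group of unit quaternions, $G=\mathbf{S}^3\times\mathbf{S}^3\times\mathbf{S}^3$, $\Delta\mathbf{S}^3=\{(q,q)\}$, $Q=\{\pm1,\pm i,\pm j,\pm k\}$ with diagonal $\Delta Q\subset G$. $\mathrm{Pin}(2)_{\underline a}=\{(e^{ia_1\theta},e^{ia_2\theta},e^{ia_3\theta})\mid\theta\in\mathbb{R}\}\cup\{(e^{ia_1\theta}j,e^{ia_2\theta}j,e^{ia_3\theta}j)\mid\theta\in\mathbb{R}\}$, $\mathrm{Pjn}(2)_{\underline b}=\{(e^{jb_1\theta},e^{jb_2\theta},e^{jb_3\theta})\}\cup\{(ie^{jb_1\theta},ie^{jb_2\theta},ie^{jb_3\theta})\}$. $P^{10}_{\underline a,\underline b}$ is the cohomogeneity-one $G$-manifold with principal isotropy group $\Delta Q$ and singular isotropy groups $\mathrm{Pin}(2)_{\underline a}$, $\mathrm{Pjn}(2)_{\underline b}$: $P^{10}_{\underline a,\underline b}=(G\times_{\mathrm{Pin}(2)_{\underline a}}\mathbf{D}^2)\cup_{G/\Delta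 Q}(G\times_{\mathrm{Pjn}(2)_{\underline b}}\mathbf{D}^2)$, where each singular isotropy group $K$ acts linearly on $\mathbf{D}^2$ extending its transitive action on the circle $K/\Delta Q$, and $G$ acts by left multiplication on the $G$-factor. Its orbits are the principal orbits $G/\Delta Q$ and the singular orbits $G/\mathrm{Pin}(2)_{\underline a}$, $G/\mathrm{Pjn}(2)_{\underline b}$. *)

theory Defs
  imports Complex_Main
begin

datatype quat = Quat (re: real) (im1: real) (im2: real) (im3: real)

definition qmult :: "quat \<Rightarrow> quat \<Rightarrow> quat" (infixl "\<cdot>\<^sub>q" 70) where
  "qmult p q = Quat
     (re p * re q - im1 p * im1 q - im2 p * im2 q - im3 p * im3 q)
     (re p * im1 q + im1 p * re q + im2 p * im3 q - im3 p * im2 q)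
     (re p * im2 q - im1 p * im3 q + im2 p * re q + im3 p * im1 q)
     (re p * im3 q + im1 p * im2 q - im2 p * im1 q + im3 p * re q)"

definition qone :: quat where "qone = Quat 1 0 0 0"
definition qi :: quat where "qi = Quat 0 1 0 0"
definition qj :: quat where "qj = Quat 0 0 1 0"
definition qk :: quat where "qk = Quat 0 0 0 1"
definition qneg :: "quat \<Rightarrow> quat" where
  "qneg q = Quat (- re q) (- im1 q) (- im2 q) (- im3 q)"
definition qconj :: "quat \<Rightarrow> quat" where
  "qconj q = Quat (re q) (- im1 q) (- im2 q) (- im3 q)"

definition S3 :: "quat set" where
  "S3 = {q. (re q)\<^sup>2 + (im1 q)\<^sup>2 + (im2 q)\<^sup>2 + (im3 q)\<^sup>2 = 1}"

definition expi :: "real \<Rightarrow> quat" where "expi t = Quat (cos t) (sin t) 0 0"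
definition expj :: "real \<Rightarrow> quat" where "expj t = Quat (cos t) 0 (sin t) 0"

definition Qgrp :: "quat set" where
  "Qgrp = {qone, qneg qone, qi, qneg qi, qj, qneg qj, qk, qneg qk}"

type_synonym g3 = "quat \<times> quat \<times> quat"

definition Gmult :: "g3 \<Rightarrow> g3 \<Rightarrow> g3" where
  "Gmult x y = (case x of (x1, x2, x3) \<Rightarrow> case y of (y1, y2, y3) \<Rightarrow>
                  (x1 \<cdot>\<^sub>q y1, x2 \<cdot>\<^sub>q y2, x3 \<cdot>\<^sub>q y3))"

definition Ginv :: "g3 \<Rightarrow> g3" where
  "Ginv x = (case x of (x1, x2, x3) \<Rightarrow> (qconj x1, qconj x2, qconj x3))"

definition Gone :: g3 where "Gone = (qone, qone, qone)"

definition Gset :: "g3 set" where "Gset = S3 \<times> S3 \<times> S3"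

definition DeltaQ :: "g3 set" where "DeltaQ = {(q, q, q) | q. q \<in> Qgrp}"

definition Pin2 :: "int \<Rightarrow> int \<Rightarrow> int \<Rightarrow> g3 set" where
  "Pin2 a1 a2 a3 =
     {(expi (of_int a1 * t), expi (of_int a2 * t), expi (of_int a3 * t)) | t. True}
   \<union> {(expi (of_int a1 * t) \<cdot>\<^sub>q qj, expi (of_int a2 * t) \<cdot>\<^sub>q qj, expi (of_int a3 * t) \<cdot>\<^sub>q qj) | t. True}"

definition Pjn2 :: "int \<Rightarrow> int \<Rightarrow> int \<Rightarrow> g3 set" where
  "Pjn2 b1 b2 b3 =
     {(expj (of_int b1 * t), expj (of_int b2 * t), expj (of_int b3 * t)) | t. True}
   \<union> {(qi \<cdot>\<^sub>q expj (of_int b1 * t), qi \<cdot>\<^sub>q expj (of_int b2 * t), qi \<cdot>\<^sub>q expj (of_int b3 * t)) | t. True}"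

text \<open>Standard model: P = (G \<times> [-1,1]) / \<sim>, where (g,t) \<sim> (g',s) iff t = s and
  g^{-1} g' lies in the isotropy group at t: Pin(2)_a at t = -1, Pjn(2)_b at t = 1,
  and \<Delta>Q for -1 < t < 1.  This is canonically G-equivariantly the union of the two
  disk bundles G \<times>_K D^2 glued along G/\<Delta>Q (radial coordinate 1+t resp. 1-t).\<close>

definition iso_grp :: "int \<times> int \<times> int \<Rightarrow> int \<times> int \<times> int \<Rightarrow> real \<Rightarrow> g3 set" where
  "iso_grp a b t =
     (if t = -1 then (case a of (a1, a2, a3) \<Rightarrow> Pin2 a1 a2 a3)
      else if t = 1 then (case b of (b1, b2, b3) \<Rightarrow> Pjn2 b1 b2 b3)
      else DeltaQ)"

definition Pcarrier :: "(g3 \<times> real) set" where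
  "Pcarrier = Gset \<times> {-1..1}"

definition Prel :: "int \<times> int \<times> int \<Rightarrow> int \<times> int \<times> int \<Rightarrow> ((g3 \<times> real) \<times> (g3 \<times> real)) set" where
  "Prel a b = {((g, t), (g', s)). (g, t) \<in> Pcarrier \<and> (g', s) \<in> Pcarrier \<and> t = s
                   \<and> Gmult (Ginv g) g' \<in> iso_grp a b t}"

definition P10 :: "int \<times> int \<times> int \<Rightarrow> int \<times> int \<times> int \<Rightarrow> (g3 \<times> real) set set" where
  "P10 a b = Pcarrier // Prel a b"

definition Gact :: "g3 \<Rightarrow> (g3 \<times> real) set \<Rightarrow> (g3 \<times> real) set" where
  "Gact h X = (\<lambda>(g, t). (Gmult h g, t)) ` X"

definition H1DS3 :: "g3 set" where
  "H1DS3 = {(qone, q, q) | q. q \<in> S3}"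

definition acts_freely :: "g3 set \<Rightarrow> (g3 \<times> real) set set \<Rightarrow> bool" where
  "acts_freely H M \<longleftrightarrow> (\<forall>h\<in>H. \<forall>x\<in>M. Gact h x = x \<longrightarrow> h = Gone)"

end

theory Submission
  imports Defs
begin

(* A point of P^10 is a coset g K_t of an isotropy group, and h fixes it iff g^-1 h g translates
   K_t onto itself.  For h = (1, q, q) the element g^-1 h^-1 g = (1, k2, k3) has k2, k3 conjugate
   to q^-1, hence of equal real part.  In Pin(2)_a such an element is (e^(i a1 s), e^(i a2 s),
   e^(i a3 s)) with cos (a1 s) = 1 and cos (a2 s) = cos (a3 s); then a1 s and (a2 + a3) s or
   (a2 - a3) s lie in 2 pi Z, and if gcd (a1, a2 +- a3) = 1 Bezout gives s in 2 pi Z, so k2 = 1.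
   Conversely, if d > 1 divides a1 and a2 + a3 (resp. a2 - a3), the element of Pin(2)_a at
   s = 2 pi / d is (1, q, j^-1 q j) (resp. (1, q, q)) with q = e^(i a2 s) /= 1, because
   gcd (a1, a2, a3) = 1; it is conjugate to (1, q, q), which therefore fixes a point of the
   singular orbit.  Pjn(2)_b is the image of Pin(2)_b under the automorphism i <-> j, k -> -k
   of the quaternions, so it is handled by the same argument. *)

section \<open>Circle arithmetic\<close>

lemma cos_of_int_mult_eq_1:
  fixes s :: real
  assumes "cos s = 1" shows "cos (of_int n * s) = 1"
proof -
  obtain k :: int where "s = of_int k * 2 * pi"
    using assms by (auto simp: cos_one_2pi_int)
  then have "of_int n * s = of_int (n * k) * 2 * pi"
    by simp
  then show ?thesis
    by (auto simp: cos_one_2pi_int simp del: of_int_mult)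
qed

lemma cos_eq_1_if_coprime:
  fixes m n :: int and s :: real
  assumes "coprime m n" "cos (of_int m * s) = 1" "cos (of_int n * s) = 1"
  shows "cos s = 1"
proof -
  obtain u v where "u * m + v * n = 1"
    using bezout_int [of m n] assms(1) by (auto simp: coprime_iff_gcd_eq_1)
  then have "s = of_int u * (of_int m * s) + of_int v * (of_int n * s)"
    by (metis mult.assoc mult_1 distrib_right of_int_1 of_int_add of_int_mult)
  then have "cos s = cos (of_int u * (of_int m * s) + of_int v * (of_int n * s))"
    by simp
  also have "\<dots> = 1"
    using assms(2,3) cos_of_int_mult_eq_1 [of "of_int m * s" u] cos_of_int_mult_eq_1 [of "of_int n * s" v]
    by (simp add: cos_add cos_one_sin_zero)
  finally show ?thesis .
qed

lemma cos_eq_cosD: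
  fixes x y :: real
  assumes "cos x = cos y"
  shows "cos (x + y) = 1 \<or> cos (x - y) = 1"
proof -
  have "sin ((x + y) / 2) = 0 \<or> sin ((y - x) / 2) = 0"
    using assms cos_diff_cos [of x y] by simp
  moreover have "cos (x + y) = 1 - 2 * sin ((x + y) / 2) ^ 2"
    using cos_double_sin [of "(x + y) / 2"] by (simp add: add_divide_distrib)
  moreover have "cos (x - y) = 1 - 2 * sin ((y - x) / 2) ^ 2"
    using cos_double_sin [of "(y - x) / 2"] cos_minus [of "x - y"] by (simp add: diff_divide_distrib)
  ultimately show ?thesis
    by auto
qed

lemma cos_mult_2pi_div_eq_1_iff:
  fixes m d :: int
  assumes "d \<noteq> 0"
  shows "cos (of_int m * (2 * pi / of_int d)) = 1 \<longleftrightarrow> d dvd m"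
proof -
  have "cos (of_int m * (2 * pi / of_int d)) = 1 \<longleftrightarrow> (\<exists>n::int. (of_int m :: real) = of_int (n * d))"
    using assms by (simp add: cos_one_2pi_int field_simps)
  also have "\<dots> \<longleftrightarrow> d dvd m"
    by (simp only: of_int_eq_iff) (auto simp: dvd_def mult.commute)
  finally show ?thesis .
qed

section \<open>Unit quaternions\<close>

lemma quat_eqI:
  "re p = re q \<Longrightarrow> im1 p = im1 q \<Longrightarrow> im2 p = im2 q \<Longrightarrow> im3 p = im3 q \<Longrightarrow> p = q"
  by (cases p; cases q) auto

lemma qmult_assoc [simp]: "(p \<cdot>\<^sub>q q) \<cdot>\<^sub>q r = p \<cdot>\<^sub>q (q \<cdot>\<^sub>q r)"
  by (rule quat_eqI) (simp_all add: qmult_def algebra_simps)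

lemma qone_qmult [simp]: "qone \<cdot>\<^sub>q q = q"
  and qmult_qone [simp]: "q \<cdot>\<^sub>q qone = q"
  by (rule quat_eqI; simp add: qmult_def qone_def)+

lemma qconj_qone [simp]: "qconj qone = qone"
  by (rule quat_eqI) (simp_all add: qconj_def qone_def)

lemma qconj_qconj [simp]: "qconj (qconj q) = q"
  by (rule quat_eqI) (simp_all add: qconj_def)

lemma S3_qmult_qconj [simp]: "q \<in> S3 \<Longrightarrow> q \<cdot>\<^sub>q qconj q = qone"
  and S3_qconj_qmult [simp]: "q \<in> S3 \<Longrightarrow> qconj q \<cdot>\<^sub>q q = qone"
  by (rule quat_eqI; simp add: S3_def qmult_def qconj_def qone_def power2_eq_square algebra_simps)+

lemma S3_qmult_cancel_left [simp]:
  "q \<in> S3 \<Longrightarrow> q \<cdot>\<^sub>q (qconj q \<cdot>\<^sub>q p) = p"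
  "q \<in> S3 \<Longrightarrow> qconj q \<cdot>\<^sub>q (q \<cdot>\<^sub>q p) = p"
  by (simp_all flip: qmult_assoc)

lemma S3_qmult [intro]:
  assumes "p \<in> S3" "q \<in> S3" shows "p \<cdot>\<^sub>q q \<in> S3"
proof -
  have "(re (p \<cdot>\<^sub>q q))\<^sup>2 + (im1 (p \<cdot>\<^sub>q q))\<^sup>2 + (im2 (p \<cdot>\<^sub>q q))\<^sup>2 + (im3 (p \<cdot>\<^sub>q q))\<^sup>2
      = ((re p)\<^sup>2 + (im1 p)\<^sup>2 + (im2 p)\<^sup>2 + (im3 p)\<^sup>2) * ((re q)\<^sup>2 + (im1 q)\<^sup>2 + (im2 q)\<^sup>2 + (im3 q)\<^sup>2)"
    by (simp add: qmult_def power2_eq_square algebra_simps)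
  with assms show ?thesis by (simp add: S3_def)
qed

lemma S3_basis [intro, simp]: "qone \<in> S3" "qi \<in> S3" "qj \<in> S3" "qk \<in> S3"
  by (simp_all add: S3_def qone_def qi_def qj_def qk_def)

lemma S3_qneg [intro]: "q \<in> S3 \<Longrightarrow> qneg q \<in> S3"
  by (simp add: S3_def qneg_def)

lemma qconj_eq_qone_iff [simp]: "qconj q = qone \<longleftrightarrow> q = qone"
  by (metis qconj_qconj qconj_qone)

lemma re_conjugate:
  assumes "p \<in> S3" shows "re (qconj p \<cdot>\<^sub>q (r \<cdot>\<^sub>q p)) = re r"
proof -
  have "re (qconj p \<cdot>\<^sub>q (r \<cdot>\<^sub>q p)) = re r * ((re p)\<^sup>2 + (im1 p)\<^sup>2 + (im2 p)\<^sup>2 + (im3 p)\<^sup>2)"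
    by (simp add: qmult_def qconj_def power2_eq_square algebra_simps)
  with assms show ?thesis by (simp add: S3_def)
qed

lemma conjugate_eq_qone_iff:
  assumes "p \<in> S3"
  shows "qconj p \<cdot>\<^sub>q (r \<cdot>\<^sub>q p) = qone \<longleftrightarrow> r = qone"
proof
  assume conj: "qconj p \<cdot>\<^sub>q (r \<cdot>\<^sub>q p) = qone"
  from assms have "r = p \<cdot>\<^sub>q ((qconj p \<cdot>\<^sub>q (r \<cdot>\<^sub>q p)) \<cdot>\<^sub>q qconj p)"
    by simp
  also have "\<dots> = qone"
    using assms by (simp only: conj qone_qmult S3_qmult_qconj)
  finally show "r = qone" .
qed (use assms in simp)

lemma expi_add: "expi x \<cdot>\<^sub>q expi y = expi (x + y)"
  by (rule quat_eqI) (simp_all add: qmult_def expi_def cos_add sin_add algebra_simps)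

lemma expi_zero [simp]: "expi 0 = qone"
  by (simp add: expi_def qone_def)

lemma S3_expi [intro, simp]: "expi x \<in> S3"
  by (simp add: S3_def expi_def)

lemma expi_eq_expi_iff: "expi x = expi y \<longleftrightarrow> cos (x - y) = 1"
proof -
  have "expi x = expi y \<longleftrightarrow> (\<exists>n::int. x = y + 2 * pi * n)"
    by (simp add: expi_def sin_cos_eq_iff [symmetric] conj_commute)
  also have "\<dots> \<longleftrightarrow> cos (x - y) = 1"
    by (auto simp: cos_one_2pi_int algebra_simps)
  finally show ?thesis .
qed

lemma expi_eq_qone_iff: "expi x = qone \<longleftrightarrow> cos x = 1"
  using expi_eq_expi_iff [of x 0] by simp

lemma expi_mult_2pi_div_eq_iff:
  fixes m n d :: int
  assumes "d \<noteq> 0"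
  shows "expi (of_int m * (2 * pi / of_int d)) = expi (of_int n * (2 * pi / of_int d)) \<longleftrightarrow> d dvd m - n"
  using cos_mult_2pi_div_eq_1_iff [OF assms, of "m - n"]
  by (simp add: expi_eq_expi_iff left_diff_distrib del: times_divide_eq_right)

lemma qj_conjugate_expi: "qconj qj \<cdot>\<^sub>q (expi x \<cdot>\<^sub>q qj) = expi (- x)"
  by (rule quat_eqI) (simp_all add: qmult_def expi_def qj_def qconj_def)

lemma re_expi_qj: "re (expi x \<cdot>\<^sub>q qj) = 0"
  by (simp add: qmult_def expi_def qj_def)

(* Conjugation by (i + j)/sqrt 2: it swaps i and j and negates k. *)
definition qswap :: "quat \<Rightarrow> quat" where
  "qswap q = Quat (re q) (im2 q) (im1 q) (- im3 q)"

lemma qswap_qmult: "qswap (p \<cdot>\<^sub>q q) = qswap p \<cdot>\<^sub>q qswap q"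
  by (rule quat_eqI) (simp_all add: qswap_def qmult_def algebra_simps)

lemma qswap_qswap [simp]: "qswap (qswap q) = q"
  by (rule quat_eqI) (simp_all add: qswap_def)

lemma qswap_qconj: "qswap (qconj q) = qconj (qswap q)"
  by (rule quat_eqI) (simp_all add: qswap_def qconj_def)

lemma qswap_qone [simp]: "qswap qone = qone"
  by (rule quat_eqI) (simp_all add: qswap_def qone_def)

lemma qswap_eq_qone_iff [simp]: "qswap q = qone \<longleftrightarrow> q = qone"
  by (metis qswap_qswap qswap_qone)

lemma re_qswap [simp]: "re (qswap q) = re q"
  by (simp add: qswap_def)

lemma S3_qswap [intro]: "q \<in> S3 \<Longrightarrow> qswap q \<in> S3"
  by (simp add: S3_def qswap_def add.commute add.left_commute)

lemma qswap_expi: "qswap (expi x) = expj x"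
  by (rule quat_eqI) (simp_all add: qswap_def expi_def expj_def)

lemma qswap_expi_qj: "qswap (expi x \<cdot>\<^sub>q qj) = qi \<cdot>\<^sub>q expj (- x)"
  by (rule quat_eqI) (simp_all add: qswap_def qmult_def expi_def expj_def qi_def qj_def)

lemma Gmult_triple [simp]: "Gmult (x1, x2, x3) (y1, y2, y3) = (x1 \<cdot>\<^sub>q y1, x2 \<cdot>\<^sub>q y2, x3 \<cdot>\<^sub>q y3)"
  by (simp add: Gmult_def)

lemma Ginv_triple [simp]: "Ginv (x1, x2, x3) = (qconj x1, qconj x2, qconj x3)"
  by (simp add: Ginv_def)

lemma Gmult_assoc [simp]: "Gmult (Gmult x y) z = Gmult x (Gmult y z)"
  by (cases x; cases y; cases z) (simp add: Gmult_def)

lemma Gmult_Gone [simp]: "Gmult x Gone = x"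
  by (cases x) (simp add: Gmult_def Gone_def)

lemma Gset_Gmult [intro]: "x \<in> Gset \<Longrightarrow> y \<in> Gset \<Longrightarrow> Gmult x y \<in> Gset"
  by (cases x; cases y) (auto simp: Gmult_def Gset_def)

lemma Gset_Gmult_cancel_left [simp]:
  "x \<in> Gset \<Longrightarrow> Gmult x (Gmult (Ginv x) y) = y"
  "x \<in> Gset \<Longrightarrow> Gmult (Ginv x) (Gmult x y) = y"
  by (cases x; cases y; simp add: Gmult_def Ginv_def Gset_def)+

definition Gswap :: "g3 \<Rightarrow> g3" where
  "Gswap x = (case x of (x1, x2, x3) \<Rightarrow> (qswap x1, qswap x2, qswap x3))"

lemma Gswap_Gmult: "Gswap (Gmult x y) = Gmult (Gswap x) (Gswap y)"
  by (cases x; cases y) (simp add: Gswap_def Gmult_def qswap_qmult)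

lemma Gswap_Gset: "x \<in> Gset \<Longrightarrow> Gswap x \<in> Gset"
  by (cases x) (auto simp: Gswap_def Gset_def)

lemma Pin2_subset_Gset: "Pin2 a1 a2 a3 \<subseteq> Gset"
  by (auto simp: Pin2_def Gset_def)

lemma Pjn2_eq_Gswap_image: "Pjn2 b1 b2 b3 = Gswap ` Pin2 b1 b2 b3"
proof -
  have expi: "Gswap (expi (of_int b1 * t), expi (of_int b2 * t), expi (of_int b3 * t))
      = (expj (of_int b1 * t), expj (of_int b2 * t), expj (of_int b3 * t))" for t
    by (simp add: Gswap_def qswap_expi)
  have expi_qj: "Gswap (expi (of_int b1 * t) \<cdot>\<^sub>q qj, expi (of_int b2 * t) \<cdot>\<^sub>q qj, expi (of_int b3 * t) \<cdot>\<^sub>q qj)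
      = (qi \<cdot>\<^sub>q expj (of_int b1 * - t), qi \<cdot>\<^sub>q expj (of_int b2 * - t), qi \<cdot>\<^sub>q expj (of_int b3 * - t))" for t
    by (simp add: Gswap_def qswap_expi_qj)
  show ?thesis
  proof (intro equalityI subsetI)
    fix x assume "x \<in> Pjn2 b1 b2 b3"
    then consider t where "x = (expj (of_int b1 * t), expj (of_int b2 * t), expj (of_int b3 * t))"
      | t where "x = (qi \<cdot>\<^sub>q expj (of_int b1 * t), qi \<cdot>\<^sub>q expj (of_int b2 * t), qi \<cdot>\<^sub>q expj (of_int b3 * t))"
      unfolding Pjn2_def by blast
    then show "x \<in> Gswap ` Pin2 b1 b2 b3"
    proof cases
      case (1 t)
      then show ?thesis
        unfolding Pin2_def expi [symmetric] by blast
    next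
      case (2 t)
      then have "x = Gswap (expi (of_int b1 * - t) \<cdot>\<^sub>q qj, expi (of_int b2 * - t) \<cdot>\<^sub>q qj, expi (of_int b3 * - t) \<cdot>\<^sub>q qj)"
        using expi_qj [of "- t"] by simp
      then show ?thesis
        unfolding Pin2_def by blast
    qed
  next
    fix x assume "x \<in> Gswap ` Pin2 b1 b2 b3"
    then show "x \<in> Pjn2 b1 b2 b3"
      unfolding Pjn2_def Pin2_def image_Un by (auto simp only: image_iff expi expi_qj)
  qed
qed

lemma iso_grp_subset_Gset: "iso_grp a b t \<subseteq> Gset"
proof -
  have "Pjn2 b1 b2 b3 \<subseteq> Gset" for b1 b2 b3
    unfolding Pjn2_eq_Gswap_image using Pin2_subset_Gset Gswap_Gset by blast
  moreover have "DeltaQ \<subseteq> Gset"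
    by (auto simp: DeltaQ_def Qgrp_def Gset_def)
  ultimately show ?thesis
    using Pin2_subset_Gset by (simp add: iso_grp_def split: prod.splits)
qed

lemma Gone_in_iso_grp: "Gone \<in> iso_grp a b t"
proof -
  have "Gone \<in> Pin2 a1 a2 a3" for a1 a2 a3
    unfolding Pin2_def Gone_def by (auto intro!: exI [of _ 0])
  moreover have "Gswap Gone = Gone"
    by (simp add: Gswap_def Gone_def)
  ultimately show ?thesis
    by (force simp: iso_grp_def Pjn2_eq_Gswap_image DeltaQ_def Qgrp_def Gone_def split: prod.splits)
qed

section \<open>Fixed points of the action on P^10\<close>

lemma P10_class_eq:
  assumes "g \<in> Gset" "t \<in> {-1..1}"
  shows "Prel a b `` {(g, t)} = (\<lambda>k. (Gmult g k, t)) ` iso_grp a b t"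
proof (intro set_eqI iffI)
  fix x assume "x \<in> Prel a b `` {(g, t)}"
  then obtain g' where "x = (g', t)" "Gmult (Ginv g) g' \<in> iso_grp a b t"
    by (auto simp: Prel_def)
  with assms show "x \<in> (\<lambda>k. (Gmult g k, t)) ` iso_grp a b t"
    by (auto intro!: image_eqI [of _ _ "Gmult (Ginv g) g'"])
next
  fix x assume "x \<in> (\<lambda>k. (Gmult g k, t)) ` iso_grp a b t"
  then obtain k where "x = (Gmult g k, t)" "k \<in> iso_grp a b t"
    by auto
  with assms iso_grp_subset_Gset [of a b t] show "x \<in> Prel a b `` {(g, t)}"
    by (auto simp: Prel_def Pcarrier_def)
qed

lemma class_fixed_imp_conj_mem:
  assumes "g \<in> Gset" "h \<in> Gset" "t \<in> {-1..1}"
    and "Gact h (Prel a b `` {(g, t)}) = Prel a b `` {(g, t)}"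
  shows "Gmult (Ginv g) (Gmult (Ginv h) g) \<in> iso_grp a b t"
proof -
  have "(g, t) \<in> Gact h (Prel a b `` {(g, t)})"
    using assms Gone_in_iso_grp [of a b t] by (force simp: P10_class_eq)
  then obtain k where "k \<in> iso_grp a b t" "g = Gmult h (Gmult g k)"
    using assms(1,3) by (auto simp: P10_class_eq Gact_def)
  then have "Gmult (Ginv g) (Gmult (Ginv h) g) = k"
    using assms(1,2) by (metis Gset_Gmult_cancel_left)
  with \<open>k \<in> iso_grp a b t\<close> show ?thesis
    by simp
qed

lemma class_fixed_if_conj_translates:
  assumes "g \<in> Gset" "h \<in> Gset" "t \<in> {-1..1}"
    and "Gmult (Gmult (Ginv g) (Gmult h g)) ` iso_grp a b t = iso_grp a b t"
  shows "Gact h (Prel a b `` {(g, t)}) = Prel a b `` {(g, t)}"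
proof -
  have "Gact h (Prel a b `` {(g, t)}) = (\<lambda>k. (Gmult g k, t)) ` Gmult (Gmult (Ginv g) (Gmult h g)) ` iso_grp a b t"
    using assms(1,3) by (simp add: P10_class_eq Gact_def image_image)
  with assms show ?thesis
    by (simp add: P10_class_eq)
qed

(* An element (1, k2, k3) lies in a conjugate of {1} x Delta S^3 iff k2 and k3 are conjugate
   in S^3, i.e. have the same real part; so K meets all these conjugates trivially. *)
definition diag_conj_trivial :: "g3 set \<Rightarrow> bool" where
  "diag_conj_trivial K \<longleftrightarrow> (\<forall>k2 k3. (qone, k2, k3) \<in> K \<longrightarrow> re k2 = re k3 \<longrightarrow> k2 = qone)"

(* (1, q, w^-1 q w) is the conjugate of (1, q, q) by (1, 1, w). *)
definition diag_conj_invariant :: "g3 set \<Rightarrow> bool" where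
  "diag_conj_invariant K \<longleftrightarrow>
     (\<exists>q w. q \<in> S3 \<and> q \<noteq> qone \<and> w \<in> S3 \<and> Gmult (qone, q, qconj w \<cdot>\<^sub>q (q \<cdot>\<^sub>q w)) ` K = K)"

lemma acts_freely_H1DS3_P10I:
  assumes "\<And>t. t \<in> {-1..1} \<Longrightarrow> diag_conj_trivial (iso_grp a b t)"
  shows "acts_freely H1DS3 (P10 a b)"
  unfolding acts_freely_def
proof (intro ballI impI)
  fix h x assume "h \<in> H1DS3" "x \<in> P10 a b" and fixed: "Gact h x = x"
  then obtain q g t where q: "q \<in> S3" and h: "h = (qone, q, q)"
    and gt: "g \<in> Gset" "t \<in> {-1..1}" and x: "x = Prel a b `` {(g, t)}"
    by (auto simp: H1DS3_def P10_def quotient_def Pcarrier_def)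
  obtain g1 g2 g3 where g: "g = (g1, g2, g3)" and S3: "g1 \<in> S3" "g2 \<in> S3" "g3 \<in> S3"
    using gt(1) by (auto simp: Gset_def)
  have "h \<in> Gset"
    using q h by (simp add: Gset_def)
  with gt fixed x have "Gmult (Ginv g) (Gmult (Ginv h) g) \<in> iso_grp a b t"
    by (simp add: class_fixed_imp_conj_mem)
  then have "(qone, qconj g2 \<cdot>\<^sub>q (qconj q \<cdot>\<^sub>q g2), qconj g3 \<cdot>\<^sub>q (qconj q \<cdot>\<^sub>q g3)) \<in> iso_grp a b t"
    using S3 by (simp add: g h)
  with assms [OF gt(2)] S3 have "qconj g2 \<cdot>\<^sub>q (qconj q \<cdot>\<^sub>q g2) = qone"
    by (simp add: diag_conj_trivial_def re_conjugate)
  with S3 have "q = qone"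
    by (simp add: conjugate_eq_qone_iff)
  then show "h = Gone"
    by (simp add: h Gone_def)
qed

lemma not_acts_freely_H1DS3_P10I:
  assumes "t \<in> {-1..1}" "diag_conj_invariant (iso_grp a b t)"
  shows "\<not> acts_freely H1DS3 (P10 a b)"
proof -
  obtain q w where q: "q \<in> S3" "q \<noteq> qone" and w: "w \<in> S3"
    and translates: "Gmult (qone, q, qconj w \<cdot>\<^sub>q (q \<cdot>\<^sub>q w)) ` iso_grp a b t = iso_grp a b t"
    using assms(2) by (auto simp: diag_conj_invariant_def)
  define g where "g = (qone, qone, w)"
  have g: "g \<in> Gset" and h: "(qone, q, q) \<in> Gset"
    using q w by (simp_all add: g_def Gset_def)
  have "Gmult (Ginv g) (Gmult (qone, q, q) g) = (qone, q, qconj w \<cdot>\<^sub>q (q \<cdot>\<^sub>q w))"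
    by (simp add: g_def)
  with g h assms(1) translates
  have "Gact (qone, q, q) (Prel a b `` {(g, t)}) = Prel a b `` {(g, t)}"
    by (simp add: class_fixed_if_conj_translates)
  moreover have "Prel a b `` {(g, t)} \<in> P10 a b"
    using g assms(1) unfolding P10_def Pcarrier_def by (intro quotientI) simp
  moreover have "(qone, q, q) \<in> H1DS3" "(qone, q, q) \<noteq> Gone"
    using q by (auto simp: H1DS3_def Gone_def)
  ultimately show ?thesis
    unfolding acts_freely_def by blast
qed

section \<open>The singular isotropy groups\<close>

lemma Pin2_translate:
  "Gmult (expi (of_int a1 * x), expi (of_int a2 * x), expi (of_int a3 * x)) ` Pin2 a1 a2 a3 = Pin2 a1 a2 a3"
    (is "Gmult (?c x) ` ?K = ?K")
proof -
  have subset: "Gmult (?c x) ` ?K \<subseteq> ?K" for x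
  proof
    fix k assume "k \<in> Gmult (?c x) ` ?K"
    then consider t where "k = Gmult (?c x) (?c t)"
      | t where "k = Gmult (?c x) (Gmult (?c t) (qj, qj, qj))"
      unfolding Pin2_def by auto
    then show "k \<in> ?K"
    proof cases
      case (1 t)
      then have "k = ?c (x + t)"
        by (simp add: expi_add distrib_left)
      then show ?thesis
        unfolding Pin2_def by blast
    next
      case (2 t)
      then have "k = Gmult (?c (x + t)) (qj, qj, qj)"
        by (simp add: expi_add distrib_left flip: qmult_assoc)
      then show ?thesis
        unfolding Pin2_def by auto
    qed
  qed
  have "Gmult (?c x) (Gmult (?c (- x)) k) = k" for k
    by (cases k) (simp add: expi_add flip: qmult_assoc)
  then have "?K = Gmult (?c x) ` Gmult (?c (- x)) ` ?K"
    by (simp add: image_image)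
  also have "\<dots> \<subseteq> Gmult (?c x) ` ?K"
    using subset by (intro image_mono)
  finally show ?thesis
    using subset by blast
qed

lemma diag_conj_trivial_Pin2:
  assumes "coprime a1 (a2 + a3)" "coprime a1 (a2 - a3)"
  shows "diag_conj_trivial (Pin2 a1 a2 a3)"
  unfolding diag_conj_trivial_def
proof (intro allI impI)
  fix k2 k3 assume k: "(qone, k2, k3) \<in> Pin2 a1 a2 a3" and re: "re k2 = re k3"
  obtain s where "(qone, k2, k3) = (expi (of_int a1 * s), expi (of_int a2 * s), expi (of_int a3 * s))
      \<or> (qone, k2, k3) = (expi (of_int a1 * s) \<cdot>\<^sub>q qj, expi (of_int a2 * s) \<cdot>\<^sub>q qj, expi (of_int a3 * s) \<cdot>\<^sub>q qj)"
    using k unfolding Pin2_def by blast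
  moreover have "qone \<noteq> expi x \<cdot>\<^sub>q qj" for x
    using re_expi_qj [of x] by (metis qone_def quat.sel(1) zero_neq_one)
  ultimately have s: "expi (of_int a1 * s) = qone" "k2 = expi (of_int a2 * s)" "k3 = expi (of_int a3 * s)"
    by auto
  have "cos (of_int a2 * s) = cos (of_int a3 * s)"
    using re by (simp add: s expi_def)
  then have "cos (of_int (a2 + a3) * s) = 1 \<or> cos (of_int (a2 - a3) * s) = 1"
    using cos_eq_cosD by (simp add: distrib_right left_diff_distrib)
  moreover have "cos (of_int a1 * s) = 1"
    using s(1) by (simp add: expi_eq_qone_iff)
  ultimately have "cos s = 1"
    using assms cos_eq_1_if_coprime by blast
  then show "k2 = qone"
    by (simp add: s expi_eq_qone_iff cos_of_int_mult_eq_1)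
qed

lemma diag_conj_invariant_Pin2:
  assumes "a1 \<noteq> 0" "gcd a1 (gcd a2 a3) = 1" "\<not> (coprime a1 (a2 + a3) \<and> coprime a1 (a2 - a3))"
  shows "diag_conj_invariant (Pin2 a1 a2 a3)"
proof -
  obtain d where d: "d dvd a1" "d dvd a2 + a3 \<or> d dvd a2 - a3" "\<not> is_unit d"
  proof -
    from assms(3) consider "\<not> coprime a1 (a2 + a3)" | "\<not> coprime a1 (a2 - a3)"
      by blast
    then show thesis
      by cases (metis not_coprimeE that)+
  qed
  have "d \<noteq> 0"
    using d(1) assms(1) by auto
  have "\<not> d dvd a2"
  proof
    assume "d dvd a2"
    moreover have "a3 = (a2 + a3) - a2" "a3 = a2 - (a2 - a3)"
      by simp_all
    ultimately have "d dvd a3"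
      using d(2) by (metis dvd_diff)
    with \<open>d dvd a2\<close> d(1) have "d dvd gcd a1 (gcd a2 a3)"
      by simp
    with assms(2) d(3) show False
      by simp
  qed
  define s where "s = 2 * pi / of_int d"
  define q where "q = expi (of_int a2 * s)"
  have expi_eq: "expi (of_int m * s) = expi (of_int n * s) \<longleftrightarrow> d dvd m - n" for m n
    unfolding s_def using \<open>d \<noteq> 0\<close> by (rule expi_mult_2pi_div_eq_iff)
  obtain w where w: "w \<in> S3" "qconj w \<cdot>\<^sub>q (q \<cdot>\<^sub>q w) = expi (of_int a3 * s)"
  proof (cases "d dvd a2 + a3")
    case True
    then have "expi (of_int (- a2) * s) = expi (of_int a3 * s)"
      using expi_eq [of a3 "- a2"] by (simp add: add.commute)
    then show ?thesis
      using that [of qj] by (simp add: q_def qj_conjugate_expi)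
  next
    case False
    with d(2) have "q = expi (of_int a3 * s)"
      by (simp add: q_def expi_eq)
    then show ?thesis
      using that [of qone] by simp
  qed
  have "expi (of_int a1 * s) = qone"
    using expi_eq [of a1 0] d(1) by simp
  moreover have "q \<noteq> qone"
    using expi_eq [of a2 0] \<open>\<not> d dvd a2\<close> by (simp add: q_def)
  ultimately have "(qone, q, qconj w \<cdot>\<^sub>q (q \<cdot>\<^sub>q w)) = (expi (of_int a1 * s), expi (of_int a2 * s), expi (of_int a3 * s))"
    using w(2) by (simp add: q_def)
  then show ?thesis
    unfolding diag_conj_invariant_def using w(1) \<open>q \<noteq> qone\<close> Pin2_translate [of a1 s a2 a3]
    by (metis q_def S3_expi)
qed

lemma diag_conj_trivial_Gswap_image:
  assumes "diag_conj_trivial K"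
  shows "diag_conj_trivial (Gswap ` K)"
  unfolding diag_conj_trivial_def
proof (intro allI impI)
  fix k2 k3 assume "(qone, k2, k3) \<in> Gswap ` K" "re k2 = re k3"
  then obtain x1 x2 x3 where "(x1, x2, x3) \<in> K" "Gswap (x1, x2, x3) = (qone, k2, k3)"
    by (metis image_iff prod_cases3)
  with assms \<open>re k2 = re k3\<close> show "k2 = qone"
    by (auto simp: diag_conj_trivial_def Gswap_def)
qed

lemma diag_conj_invariant_Gswap_image:
  assumes "diag_conj_invariant K"
  shows "diag_conj_invariant (Gswap ` K)"
proof -
  obtain q w where q: "q \<in> S3" "q \<noteq> qone" and w: "w \<in> S3"
    and translates: "Gmult (qone, q, qconj w \<cdot>\<^sub>q (q \<cdot>\<^sub>q w)) ` K = K"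
    using assms by (auto simp: diag_conj_invariant_def)
  have "Gmult (qone, qswap q, qconj (qswap w) \<cdot>\<^sub>q (qswap q \<cdot>\<^sub>q qswap w)) \<circ> Gswap
      = Gswap \<circ> Gmult (qone, q, qconj w \<cdot>\<^sub>q (q \<cdot>\<^sub>q w))"
    by (simp add: fun_eq_iff Gswap_Gmult Gswap_def qswap_qmult qswap_qconj)
  then have "Gmult (qone, qswap q, qconj (qswap w) \<cdot>\<^sub>q (qswap q \<cdot>\<^sub>q qswap w)) ` Gswap ` K = Gswap ` K"
    by (metis image_comp translates)
  with q w show ?thesis
    unfolding diag_conj_invariant_def by (intro exI [of _ "qswap q"] exI [of _ "qswap w"]) auto
qed

lemma diag_conj_trivial_DeltaQ: "diag_conj_trivial DeltaQ"
  by (auto simp: diag_conj_trivial_def DeltaQ_def)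

lemma diag_conj_trivial_iso_grp:
  assumes "coprime a1 (a2 + a3)" "coprime a1 (a2 - a3)" "coprime b1 (b2 + b3)" "coprime b1 (b2 - b3)"
  shows "diag_conj_trivial (iso_grp (a1, a2, a3) (b1, b2, b3) t)"
  using assms
  by (simp add: iso_grp_def Pjn2_eq_Gswap_image diag_conj_trivial_Pin2 diag_conj_trivial_Gswap_image
      diag_conj_trivial_DeltaQ)

theorem lemma2p1:
  fixes a1 a2 a3 b1 b2 b3 :: int
  assumes "a1 mod 4 = 1" "a2 mod 4 = 1" "a3 mod 4 = 1"
      and "b1 mod 4 = 1" "b2 mod 4 = 1" "b3 mod 4 = 1"
      and "gcd a1 (gcd a2 a3) = 1" and "gcd b1 (gcd b2 b3) = 1"
  shows "acts_freely H1DS3 (P10 (a1, a2, a3) (b1, b2, b3)) \<longleftrightarrow>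
           (gcd a1 (a2 + a3) = 1 \<and> gcd a1 (a2 - a3) = 1 \<and>
            gcd b1 (b2 + b3) = 1 \<and> gcd b1 (b2 - b3) = 1)"
proof -
  \<comment> \<open>The congruences mod 4 (which make Delta Q a subgroup of Pin(2)_a and Pjn(2)_b in the
    paper) are needed here only to rule out a1 = 0 and b1 = 0.\<close>
  have "a1 \<noteq> 0" "b1 \<noteq> 0"
    using assms(1,4) by auto
  have "\<not> acts_freely H1DS3 (P10 (a1, a2, a3) (b1, b2, b3))"
    if "\<not> (coprime a1 (a2 + a3) \<and> coprime a1 (a2 - a3))"
    using not_acts_freely_H1DS3_P10I [of "-1"] diag_conj_invariant_Pin2 [OF \<open>a1 \<noteq> 0\<close> assms(7) that]
    by (simp add: iso_grp_def)
  moreover have "\<not> acts_freely H1DS3 (P10 (a1, a2, a3) (b1, b2, b3))"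
    if "\<not> (coprime b1 (b2 + b3) \<and> coprime b1 (b2 - b3))"
    using not_acts_freely_H1DS3_P10I [of 1] diag_conj_invariant_Pin2 [OF \<open>b1 \<noteq> 0\<close> assms(8) that]
    by (simp add: iso_grp_def Pjn2_eq_Gswap_image diag_conj_invariant_Gswap_image)
  moreover have "acts_freely H1DS3 (P10 (a1, a2, a3) (b1, b2, b3))"
    if "coprime a1 (a2 + a3)" "coprime a1 (a2 - a3)" "coprime b1 (b2 + b3)" "coprime b1 (b2 - b3)"
    using that by (intro acts_freely_H1DS3_P10I diag_conj_trivial_iso_grp)
  ultimately show ?thesis
    by (auto simp: coprime_iff_gcd_eq_1)
qed

end
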